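(* In the contention game with $k=3$ channels under acknowledgement-based feedback and $n\in\{2,3,4,5\}$ players, the anonymous protocol $f^3$ (in every slot, regardless of history, a pending player transmits on each of the three channels with probability $1/3$ and never stays idle) is an equilibrium protocol, with expected latency of each player equal to $3/2$, $15/8$, $189/80$ and $597/200$ for $n=2,3,4,5$ respectively.
   Context: Contention game: $n$ players, channel set $K=\{1,\dots,k\}$, discrete slots $t=1,2,\dots$; each player has one packet and is initially pending. In each slot a pending player chooses (possibly at random) an action in $\{0,1,\dots,k\}$ ($0$ = no transmission, $a$ = transmit on channel $a$). A lone transmitter on a channel succeeds and leaves; two or more transmitters on a channel collide and remain pending. Latency $T_i$ = slot of player $i$'s successful transmission; players minimize expected latency. Acknowledgement-based feedback: only a player who attempted transmission learns whether she succeeded; decision rules depend only on the personal action history. A protocol is a sequence of such decision rules; an anonymous protocol is used by all players and does not depend on identity. It is an equilibrium protocol if, when all players use it, no player at any slot and after any history can decrease her conditional expected latency by unilaterally deviating. *)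

theory Defs
  imports "HOL-Probability.Probability"
begin

(* Players are 0..n-1, channels are 1..k, action 0 = stay idle.
   A pending player's personal history is the list of her past actions
   (every transmission in it failed, idle slots give no information). *)

type_synonym hist = "nat list"
type_synonym state = "nat \<Rightarrow> hist option"   (* None = departed (or not a player) *)
type_synonym rule = "hist \<Rightarrow> nat pmf"

definition valid_rule :: "nat \<Rightarrow> rule \<Rightarrow> bool" where
  "valid_rule k r \<longleftrightarrow> (\<forall>h. set_pmf (r h) \<subseteq> {0..k})"

definition actions :: "nat \<Rightarrow> (nat \<Rightarrow> rule) \<Rightarrow> state \<Rightarrow> (nat \<Rightarrow> nat) pmf" where
  "actions n \<sigma> s = Pi_pmf {..<n} 0
     (\<lambda>j. case s j of None \<Rightarrow> return_pmf 0 | Some h \<Rightarrow> \<sigma> j h)"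

definition outcome :: "nat \<Rightarrow> state \<Rightarrow> (nat \<Rightarrow> nat) \<Rightarrow> state" where
  "outcome n s a = (\<lambda>j. case s j of None \<Rightarrow> None | Some h \<Rightarrow>
     (if a j \<noteq> 0 \<and> (\<forall>j'<n. j' \<noteq> j \<longrightarrow> s j' = None \<or> a j' \<noteq> a j)
      then None else Some (h @ [a j])))"

definition step :: "nat \<Rightarrow> (nat \<Rightarrow> rule) \<Rightarrow> state \<Rightarrow> state pmf" where
  "step n \<sigma> s = map_pmf (outcome n s) (actions n \<sigma> s)"

definition run :: "nat \<Rightarrow> (nat \<Rightarrow> rule) \<Rightarrow> nat \<Rightarrow> state pmf \<Rightarrow> state pmf" where
  "run n \<sigma> m p = ((\<lambda>q. bind_pmf q (step n \<sigma>)) ^^ m) p"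

definition init :: "nat \<Rightarrow> state" where
  "init n = (\<lambda>j. if j < n then Some [] else None)"

(* expected number of further slots until player i succeeds:
   sum over m >= 0 of P(player i still pending after m further slots) *)
definition exp_remaining :: "nat \<Rightarrow> (nat \<Rightarrow> rule) \<Rightarrow> nat \<Rightarrow> state pmf \<Rightarrow> ennreal" where
  "exp_remaining n \<sigma> i p =
     (\<Sum>m. ennreal (measure_pmf.prob (run n \<sigma> m p) {s. s i \<noteq> None}))"

definition expected_latency :: "nat \<Rightarrow> rule \<Rightarrow> nat \<Rightarrow> ennreal" where
  "expected_latency n f i = exp_remaining n (\<lambda>_. f) i (return_pmf (init n))"

definition follow :: "hist \<Rightarrow> rule" where
  "follow h = (\<lambda>hh. return_pmf (if length hh < length h then h ! length hh else 0))"

(* joint distribution of the state at the start of slot (length h + 1) *)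
definition prior :: "nat \<Rightarrow> rule \<Rightarrow> nat \<Rightarrow> hist \<Rightarrow> state pmf" where
  "prior n f i h = run n ((\<lambda>_. f)(i := follow h)) (length h) (return_pmf (init n))"

definition hist_event :: "nat \<Rightarrow> hist \<Rightarrow> state set" where
  "hist_event i h = {s. s i = Some h}"

definition possible_hist :: "nat \<Rightarrow> rule \<Rightarrow> nat \<Rightarrow> hist \<Rightarrow> bool" where
  "possible_hist n f i h \<longleftrightarrow> measure_pmf.prob (prior n f i h) (hist_event i h) > 0"

definition cond_latency :: "nat \<Rightarrow> rule \<Rightarrow> rule \<Rightarrow> nat \<Rightarrow> hist \<Rightarrow> ennreal" where
  "cond_latency n f g i h =
     of_nat (length h) +
     exp_remaining n ((\<lambda>_. f)(i := g)) i (cond_pmf (prior n f i h) (hist_event i h))"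

definition equilibrium_protocol :: "nat \<Rightarrow> nat \<Rightarrow> rule \<Rightarrow> bool" where
  "equilibrium_protocol n k f \<longleftrightarrow> valid_rule k f \<and>
     (\<forall>i<n. \<forall>h. set h \<subseteq> {0..k} \<longrightarrow> possible_hist n f i h \<longrightarrow>
        (\<forall>g. valid_rule k g \<longrightarrow> cond_latency n f f i h \<le> cond_latency n f g i h))"

definition f3 :: rule where
  "f3 = (\<lambda>_. pmf_of_set {1, 2, 3})"

end

theory Submission
  imports Defs
begin

(* Let V(m) be the claimed expected latency of a pending player facing m other pending
   players, V(0) = 1. The other players' actions enter a slot only through the loads of
   the three channels, so one slot can be computed by a finite recursion over these loads.
   For m <= 4 it shows that V solves the Bellman equation of the game: transmitting on any
   channel gives V(m) = 1 + E[V(m')], where m' counts the others still pending, and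
   staying idle gives no less. Thus the potential V(#others pending) of a pending player
   is exact for f3 and a lower bound against every deviation; telescoping over the slots
   (the potential is bounded, so its expectation vanishes when the pending probability
   does) turns this into the same statements about expected remaining latency, from any
   distribution of the state, in particular from the conditional one given a history. *)

section \<open>Potentials and expected remaining latency\<close>

lemma nn_integral_pending:
  "(\<integral>\<^sup>+s. indicator {s. s i \<noteq> None} s \<partial>measure_pmf p) =
   ennreal (measure_pmf.prob p {s. s i \<noteq> None})"
  by (simp add: measure_pmf.emeasure_eq_measure)

lemma run_Suc: "run n \<sigma> (Suc k) p = bind_pmf (run n \<sigma> k p) (step n \<sigma>)"
  by (simp add: run_def)

lemma run_0: "run n \<sigma> 0 p = p"
  by (simp add: run_def)

lemma nn_integral_run_Suc_plus_pending:
  "(\<integral>\<^sup>+s. \<Phi> s \<partial>run n \<sigma> (Suc k) p) + ennreal (measure_pmf.prob (run n \<sigma> k p) {s. s i \<noteq> None}) =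
   (\<integral>\<^sup>+s. (\<integral>\<^sup>+s'. \<Phi> s' \<partial>step n \<sigma> s) + indicator {s. s i \<noteq> None} s \<partial>run n \<sigma> k p)"
  unfolding run_Suc nn_integral_bind_pmf nn_integral_pending[symmetric]
  by (subst nn_integral_add) auto

lemma exp_remaining_le_potential:
  fixes \<Phi> :: "state \<Rightarrow> ennreal" and p :: "state pmf"
  assumes super: "\<And>s. (\<integral>\<^sup>+s'. \<Phi> s' \<partial>step n \<sigma> s) + indicator {s. s i \<noteq> None} s \<le> \<Phi> s"
  shows "exp_remaining n \<sigma> i p \<le> (\<integral>\<^sup>+s. \<Phi> s \<partial>p)"
proof -
  define e where "e k = (\<integral>\<^sup>+s. \<Phi> s \<partial>run n \<sigma> k p)" for k
  define P where "P k = ennreal (measure_pmf.prob (run n \<sigma> k p) {s. s i \<noteq> None})" for k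
  have e_step: "e (Suc k) + P k \<le> e k" for k
    unfolding e_def P_def nn_integral_run_Suc_plus_pending by (intro nn_integral_mono super)
  have partial: "(\<Sum>j<k. P j) + e k \<le> e 0" for k
  proof (induction k)
    case (Suc k)
    have "(\<Sum>j<Suc k. P j) + e (Suc k) = (\<Sum>j<k. P j) + (e (Suc k) + P k)"
      by (simp add: add_ac)
    also have "\<dots> \<le> (\<Sum>j<k. P j) + e k"
      using e_step by (rule add_left_mono)
    also have "\<dots> \<le> e 0"
      by (rule Suc.IH)
    finally show ?case .
  qed simp
  have "(\<Sum>k. P k) \<le> e 0"
  proof (rule suminf_le_const[OF summableI])
    show "(\<Sum>j<k. P j) \<le> e 0" for k
      using partial[of k] by (rule order_trans[rotated]) simp
  qed
  then show ?thesis
    by (simp add: exp_remaining_def e_def P_def run_0)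
qed

lemma potential_le_exp_remaining:
  fixes \<Phi> :: "state \<Rightarrow> ennreal" and p :: "state pmf"
  assumes sub: "\<And>s. \<Phi> s \<le> (\<integral>\<^sup>+s'. \<Phi> s' \<partial>step n \<sigma> s) + indicator {s. s i \<noteq> None} s"
    and bounded: "\<And>s. \<Phi> s \<le> c * indicator {s. s i \<noteq> None} s" and "c < \<top>"
  shows "(\<integral>\<^sup>+s. \<Phi> s \<partial>p) \<le> exp_remaining n \<sigma> i p"
proof -
  define e where "e k = (\<integral>\<^sup>+s. \<Phi> s \<partial>run n \<sigma> k p)" for k
  define P where "P k = measure_pmf.prob (run n \<sigma> k p) {s. s i \<noteq> None}" for k
  have e_step: "e k \<le> e (Suc k) + ennreal (P k)" for k
    unfolding e_def P_def nn_integral_run_Suc_plus_pending by (intro nn_integral_mono sub)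
  have e_bound: "e k \<le> c * ennreal (P k)" for k
  proof -
    have "e k \<le> (\<integral>\<^sup>+s. c * indicator {s. s i \<noteq> None} s \<partial>run n \<sigma> k p)"
      unfolding e_def by (intro nn_integral_mono bounded)
    also have "\<dots> = c * ennreal (P k)"
      unfolding P_def nn_integral_pending[symmetric] by (simp add: nn_integral_cmult)
    finally show ?thesis .
  qed
  have partial: "e 0 \<le> (\<Sum>j<k. ennreal (P j)) + e k" for k
  proof (induction k)
    case (Suc k)
    have "e 0 \<le> (\<Sum>j<k. ennreal (P j)) + (e (Suc k) + ennreal (P k))"
      using Suc.IH e_step order_trans add_left_mono by blast
    then show ?case by (simp add: add_ac)
  qed simp
  show ?thesis
  proof (cases "(\<Sum>k. ennreal (P k)) = \<top>")
    case False
    then have "summable P" by (intro summable_suminf_not_top) (simp_all add: P_def)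
    then have "(\<lambda>k. (\<Sum>j<k. ennreal (P j)) + c * ennreal (P k)) \<longlonglongrightarrow> (\<Sum>k. ennreal (P k)) + c * 0"
      by (intro tendsto_add summable_LIMSEQ summableI ennreal_tendsto_cmult \<open>c < \<top>\<close>)
         (simp add: summable_LIMSEQ_zero flip: ennreal_0)
    moreover have "e 0 \<le> (\<Sum>j<k. ennreal (P j)) + c * ennreal (P k)" for k
      using partial e_bound order_trans add_left_mono by blast
    ultimately have "e 0 \<le> (\<Sum>k. ennreal (P k))"
      by (intro LIMSEQ_le_const) auto
    then show ?thesis by (simp add: exp_remaining_def e_def P_def run_0)
  qed (simp add: exp_remaining_def P_def)
qed

section \<open>Channel loads of uniformly transmitting players\<close>

fun add_choice :: "nat \<Rightarrow> nat \<times> nat \<times> nat \<Rightarrow> nat \<times> nat \<times> nat" where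
  "add_choice y (a, b, c) =
     (if y = 1 then (Suc a, b, c) else if y = 2 then (a, Suc b, c)
      else if y = 3 then (a, b, Suc c) else (a, b, c))"

(* expectation of F over the channel loads of m players who each pick one of
   the three channels uniformly at random *)
fun expect_loads :: "nat \<Rightarrow> (nat \<times> nat \<times> nat \<Rightarrow> real) \<Rightarrow> real" where
  "expect_loads 0 F = F (0, 0, 0)"
| "expect_loads (Suc m) F =
     (expect_loads m (\<lambda>v. F (add_choice 1 v)) + expect_loads m (\<lambda>v. F (add_choice 2 v))
      + expect_loads m (\<lambda>v. F (add_choice 3 v))) / 3"

definition load :: "nat set \<Rightarrow> (nat \<Rightarrow> nat) \<Rightarrow> nat \<Rightarrow> nat" where
  "load A a c = card {j\<in>A. a j = c}"

definition loads :: "nat set \<Rightarrow> (nat \<Rightarrow> nat) \<Rightarrow> nat \<times> nat \<times> nat" where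
  "loads A a = (load A a 1, load A a 2, load A a 3)"

lemma expect_loads_nonneg: "(\<And>v. F v \<ge> 0) \<Longrightarrow> expect_loads m F \<ge> 0"
  by (induction m arbitrary: F) auto

lemma load_insert:
  assumes "finite A" "x \<notin> A"
  shows "load (insert x A) (a(x := y)) c = load A a c + (if y = c then 1 else 0)"
proof -
  have "{j\<in>insert x A. (a(x := y)) j = c} =
      (if y = c then insert x {j\<in>A. a j = c} else {j\<in>A. a j = c})"
    using assms by auto
  then show ?thesis using assms by (simp add: load_def)
qed

lemma loads_insert:
  "finite A \<Longrightarrow> x \<notin> A \<Longrightarrow> loads (insert x A) (a(x := y)) = add_choice y (loads A a)"
  by (simp add: loads_def load_insert)

lemma add_choice_0 [simp]: "add_choice 0 v = v"
  by (cases v) auto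

lemma nn_integral_pmf_of_channels:
  assumes "\<And>y. E y \<ge> 0"
  shows "(\<integral>\<^sup>+y. ennreal (E y) \<partial>pmf_of_set {1, 2, 3::nat}) = ennreal ((E 1 + E 2 + E 3) / 3)"
proof -
  have "(\<integral>\<^sup>+y. ennreal (E y) \<partial>pmf_of_set {1, 2, 3::nat}) = ennreal (E 1 + E 2 + E 3) / ennreal 3"
    using assms by (simp add: nn_integral_pmf_of_set ennreal_plus add.assoc)
  also have "\<dots> = ennreal ((E 1 + E 2 + E 3) / 3)"
    using assms by (intro divide_ennreal) (auto intro: add_nonneg_nonneg)
  finally show ?thesis .
qed

lemma nn_integral_Pi_pmf_loads:
  assumes "finite A" "\<forall>j\<in>A. Q j = (if P j then pmf_of_set {1, 2, 3} else return_pmf 0)"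
    and "\<And>v. F v \<ge> 0"
  shows "(\<integral>\<^sup>+a. ennreal (F (loads A a)) \<partial>Pi_pmf A 0 Q) = ennreal (expect_loads (card {j\<in>A. P j}) F)"
  using assms
proof (induction A arbitrary: F rule: finite_induct)
  case empty
  then show ?case by (simp add: loads_def load_def)
next
  case (insert x A)
  define m where "m = card {j\<in>A. P j}"
  have IH: "(\<integral>\<^sup>+a. ennreal (F (add_choice y (loads A a))) \<partial>Pi_pmf A 0 Q) =
      ennreal (expect_loads m (\<lambda>v. F (add_choice y v)))" for y
    using insert by (auto simp: m_def intro: insert.IH)
  have "(\<integral>\<^sup>+a. ennreal (F (loads (insert x A) a)) \<partial>Pi_pmf (insert x A) 0 Q) =
      (\<integral>\<^sup>+y. \<integral>\<^sup>+a. ennreal (F (loads (insert x A) (a(x := y)))) \<partial>Pi_pmf A 0 Q \<partial>Q x)"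
    using insert by (subst Pi_pmf_insert) (simp_all add: nn_integral_pair_pmf' case_prod_beta)
  also have "\<dots> = (\<integral>\<^sup>+y. ennreal (expect_loads m (\<lambda>v. F (add_choice y v))) \<partial>Q x)"
    using insert by (simp add: loads_insert IH)
  also have "\<dots> = ennreal (expect_loads (card {j\<in>insert x A. P j}) F)"
  proof (cases "P x")
    case True
    then have "{j\<in>insert x A. P j} = insert x {j\<in>A. P j}"
      by auto
    then have "card {j\<in>insert x A. P j} = Suc m"
      using insert by (simp add: m_def)
    moreover have "Q x = pmf_of_set {1, 2, 3}"
      using insert True by simp
    ultimately show ?thesis
      using insert.prems by (simp only: nn_integral_pmf_of_channels expect_loads_nonneg expect_loads.simps)
  next
    case False
    then have "{j\<in>insert x A. P j} = {j\<in>A. P j}"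
      by auto
    then have "card {j\<in>insert x A. P j} = m"
      by (simp add: m_def)
    then show ?thesis using insert False by simp
  qed
  finally show ?case .
qed

section \<open>One slot against players using f3\<close>

fun load_of :: "nat \<Rightarrow> nat \<times> nat \<times> nat \<Rightarrow> nat" where
  "load_of y (a, b, c) = (if y = 1 then a else if y = 2 then b else c)"

(* the others that stay pending when one player chooses y and the others produce the
   loads v: those sharing their channel with another transmitter *)
fun colliding_others :: "nat \<Rightarrow> nat \<times> nat \<times> nat \<Rightarrow> nat" where
  "colliding_others y (a, b, c) =
     (if 2 \<le> a + (if y = 1 then 1 else 0) then a else 0) +
     (if 2 \<le> b + (if y = 2 then 1 else 0) then b else 0) +
     (if 2 \<le> c + (if y = 3 then 1 else 0) then c else 0)"

lemma two_le_card_iff_other: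
  assumes "finite S" "j \<in> S"
  shows "(\<exists>j'\<in>S. j' \<noteq> j) \<longleftrightarrow> 2 \<le> card S"
proof -
  have "card S \<le> 1 \<longleftrightarrow> (\<forall>a\<in>S. \<forall>b\<in>S. a = b)"
    using card_le_Suc0_iff_eq assms(1) by auto
  then show ?thesis using assms(2) by (metis not_less_eq_eq numeral_2_eq_2 One_nat_def)
qed

lemma card_colliding_others:
  assumes "finite A" "\<forall>j\<in>A. a j \<le> 3"
  shows "card {j\<in>A. a j \<noteq> 0 \<and> (a j = y \<or> 2 \<le> load A a (a j))} = colliding_others y (loads A a)"
proof -
  define B where "B c = {j\<in>A. a j = c \<and> (c = y \<or> 2 \<le> load A a c)}" for c
  have card_B: "card (B c) = (if c = y \<or> 2 \<le> load A a c then load A a c else 0)" for c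
  proof -
    have "B c = (if c = y \<or> 2 \<le> load A a c then {j\<in>A. a j = c} else {})"
      by (auto simp: B_def)
    then show ?thesis by (simp add: load_def)
  qed
  have "{j\<in>A. a j \<noteq> 0 \<and> (a j = y \<or> 2 \<le> load A a (a j))} = B 1 \<union> B 2 \<union> B 3"
    using assms(2) by (auto simp: B_def le_Suc_eq numeral_eq_Suc)
  moreover have "finite (B c)" for c
    using assms(1) by (simp add: B_def)
  moreover have "B 1 \<inter> B 2 = {}" "(B 1 \<union> B 2) \<inter> B 3 = {}"
    by (auto simp: B_def)
  ultimately have "card {j\<in>A. a j \<noteq> 0 \<and> (a j = y \<or> 2 \<le> load A a (a j))} =
      card (B 1) + card (B 2) + card (B 3)"
    by (simp add: card_Un_disjoint)
  then show ?thesis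
    unfolding card_B loads_def by auto
qed

(* V(m); the junk value 0 for m > 4 never occurs since n \<le> 5 *)
definition latency_value :: "nat \<Rightarrow> real" where
  "latency_value m =
     (if m = 0 then 1 else if m = 1 then 3/2 else if m = 2 then 15/8
      else if m = 3 then 189/80 else if m = 4 then 597/200 else 0)"

definition continuation_value :: "nat \<Rightarrow> nat \<times> nat \<times> nat \<Rightarrow> real" where
  "continuation_value y v =
     (if y \<noteq> 0 \<and> load_of y v = 0 then 0 else latency_value (colliding_others y v))"

definition potential :: "nat \<Rightarrow> nat \<Rightarrow> state \<Rightarrow> real" where
  "potential n i s =
     (if s i = None then 0 else latency_value (card {j\<in>{..<n} - {i}. s j \<noteq> None}))"

context
  fixes n i :: nat and s :: state and h A and a :: "nat \<Rightarrow> nat"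
  assumes self_pending: "i < n" "s i = Some h"
    and others: "A = {..<n} - {i}"
    and departed_idle: "\<forall>j\<in>A. s j = None \<longrightarrow> a j = 0"
    and pending_transmit: "\<forall>j\<in>A. s j \<noteq> None \<longrightarrow> a j \<in> {1, 2, 3}"
begin

lemma outcome_self_None_iff:
  assumes "y \<le> 3"
  shows "outcome n s (a(i := y)) i = None \<longleftrightarrow> y \<noteq> 0 \<and> load_of y (loads A a) = 0"
proof -
  have "outcome n s (a(i := y)) i = None \<longleftrightarrow>
      y \<noteq> 0 \<and> (\<forall>j'<n. j' \<noteq> i \<longrightarrow> s j' = None \<or> a j' \<noteq> y)"
    using self_pending by (simp add: outcome_def)
  also have "\<dots> \<longleftrightarrow> y \<noteq> 0 \<and> load A a y = 0"
    using others departed_idle by (auto simp: load_def)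
  also have "\<dots> \<longleftrightarrow> y \<noteq> 0 \<and> load_of y (loads A a) = 0"
    using assms by (auto simp: loads_def le_Suc_eq numeral_eq_Suc)
  finally show ?thesis .
qed

lemma pending_others_outcome:
  "{j\<in>A. outcome n s (a(i := y)) j \<noteq> None} =
   {j\<in>A. a j \<noteq> 0 \<and> (a j = y \<or> 2 \<le> load A a (a j))}"
proof -
  have "outcome n s (a(i := y)) j \<noteq> None \<longleftrightarrow> a j = y \<or> 2 \<le> load A a (a j)"
    if j: "j \<in> A" "a j \<noteq> 0" for j
  proof -
    have j_pending: "s j \<noteq> None" "j \<noteq> i" "j < n"
      using j others departed_idle by auto
    then have "outcome n s (a(i := y)) j \<noteq> None \<longleftrightarrow>
        (\<exists>j'<n. j' \<noteq> j \<and> s j' \<noteq> None \<and> (a(i := y)) j' = a j)"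
      using j by (auto simp: outcome_def split: option.splits)
    also have "\<dots> \<longleftrightarrow> a j = y \<or> (\<exists>j'\<in>{k\<in>A. a k = a j}. j' \<noteq> j)"
    proof
      assume "\<exists>j'<n. j' \<noteq> j \<and> s j' \<noteq> None \<and> (a(i := y)) j' = a j"
      then obtain j' where "j' < n" "j' \<noteq> j" "s j' \<noteq> None" "(a(i := y)) j' = a j"
        by blast
      then show "a j = y \<or> (\<exists>j'\<in>{k\<in>A. a k = a j}. j' \<noteq> j)"
        using others by (cases "j' = i") auto
    next
      assume "a j = y \<or> (\<exists>j'\<in>{k\<in>A. a k = a j}. j' \<noteq> j)"
      then show "\<exists>j'<n. j' \<noteq> j \<and> s j' \<noteq> None \<and> (a(i := y)) j' = a j"
      proof
        assume "a j = y"
        then show ?thesis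
          using self_pending j_pending by (intro exI[of _ i]) auto
      next
        assume "\<exists>j'\<in>{k\<in>A. a k = a j}. j' \<noteq> j"
        then obtain j' where "j' \<in> A" "a j' = a j" "j' \<noteq> j"
          by blast
        then show ?thesis
          using others departed_idle j by (intro exI[of _ j']) auto
      qed
    qed
    also have "(\<exists>j'\<in>{k\<in>A. a k = a j}. j' \<noteq> j) \<longleftrightarrow> 2 \<le> load A a (a j)"
      unfolding load_def using j others by (intro two_le_card_iff_other) auto
    finally show ?thesis .
  qed
  moreover have "outcome n s (a(i := y)) j = None" if "j \<in> A" "a j = 0" for j
  proof -
    have "s j = None"
      using that pending_transmit by auto
    then show ?thesis by (simp add: outcome_def)
  qed
  ultimately have "outcome n s (a(i := y)) j \<noteq> None \<longleftrightarrow> a j \<noteq> 0 \<and> (a j = y \<or> 2 \<le> load A a (a j))"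
    if "j \<in> A" for j
    using that by (cases "a j = 0") simp_all
  then show ?thesis by blast
qed

lemma potential_outcome:
  assumes "y \<le> 3"
  shows "potential n i (outcome n s (a(i := y))) = continuation_value y (loads A a)"
proof (cases "y \<noteq> 0 \<and> load_of y (loads A a) = 0")
  case True
  then show ?thesis
    using outcome_self_None_iff[OF assms] by (simp add: potential_def continuation_value_def)
next
  case False
  have "\<forall>j\<in>A. a j \<le> 3"
    using departed_idle pending_transmit by fastforce
  then have "card {j\<in>A. outcome n s (a(i := y)) j \<noteq> None} = colliding_others y (loads A a)"
    unfolding pending_others_outcome using others by (intro card_colliding_others) simp_all
  then show ?thesis
    using False outcome_self_None_iff[OF assms] others
    by (auto simp: potential_def continuation_value_def)
qed

end

section \<open>The Bellman equation of f3\<close>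

lemma expect_loads_continuation_transmit:
  "m \<le> 4 \<Longrightarrow> y \<in> {1, 2, 3} \<Longrightarrow> expect_loads m (continuation_value y) = latency_value m - 1"
  by (simp add: numeral_eq_Suc le_Suc_eq, elim disjE; simp add: continuation_value_def latency_value_def)

lemma expect_loads_continuation_idle:
  "m \<le> 4 \<Longrightarrow> latency_value m - 1 \<le> expect_loads m (continuation_value 0)"
  by (simp add: numeral_eq_Suc le_Suc_eq, elim disjE; simp add: continuation_value_def latency_value_def)

lemma latency_value_ge_1: "m \<le> 4 \<Longrightarrow> latency_value m \<ge> 1"
  by (auto simp: latency_value_def numeral_eq_Suc le_Suc_eq)

lemma potential_bounded: "ennreal (potential n i s) \<le> 3 * indicator {s. s i \<noteq> None} s"
  by (simp add: potential_def latency_value_def ennreal_le_iff[of 3, simplified])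

lemma card_pending_others_le:
  fixes n :: nat
  assumes "i < n" "n \<le> 5"
  shows "card {j\<in>{..<n} - {i}. s j \<noteq> None} \<le> 4"
proof -
  have "card {j\<in>{..<n} - {i}. s j \<noteq> None} \<le> card ({..<n} - {i})"
    by (rule card_mono) auto
  then show ?thesis using assms by simp
qed

lemma ennreal_potential_pending:
  assumes "i < n" "n \<le> 5" "s i = Some h"
  shows "ennreal (potential n i s) =
    ennreal (latency_value (card {j\<in>{..<n} - {i}. s j \<noteq> None}) - 1) + 1"
proof -
  define m where "m = card {j\<in>{..<n} - {i}. s j \<noteq> None}"
  have "latency_value m \<ge> 1"
    unfolding m_def by (intro latency_value_ge_1 card_pending_others_le assms(1,2))
  then have "ennreal (latency_value m) = ennreal (latency_value m - 1) + ennreal 1"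
    using ennreal_plus[of "latency_value m - 1" 1] by simp
  then show ?thesis
    using assms(3) by (simp add: potential_def m_def)
qed

lemma nn_integral_step_potential_departed:
  "s i = None \<Longrightarrow> (\<integral>\<^sup>+s'. ennreal (potential n i s') \<partial>step n \<sigma> s) = 0"
  by (simp add: step_def potential_def outcome_def)

lemma nn_integral_step_potential:
  assumes "i < n" "s i = Some h" "set_pmf (g h) \<subseteq> {0..3}"
  shows "(\<integral>\<^sup>+s'. ennreal (potential n i s') \<partial>step n ((\<lambda>_. f3)(i := g)) s) =
    (\<integral>\<^sup>+y. ennreal (expect_loads (card {j\<in>{..<n} - {i}. s j \<noteq> None}) (continuation_value y)) \<partial>g h)"
proof -
  define A where "A = {..<n} - {i}"
  define Q where "Q j = (case s j of None \<Rightarrow> return_pmf 0 | Some h \<Rightarrow> ((\<lambda>_. f3)(i := g)) j h)" for j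
  have A: "finite A" "{..<n} = insert i A" "i \<notin> A"
    using assms by (auto simp: A_def)
  have Q_i: "Q i = g h"
    using assms by (simp add: Q_def)
  have Q_others: "\<forall>j\<in>A. Q j = (if s j \<noteq> None then pmf_of_set {1, 2, 3} else return_pmf 0)"
    by (auto simp: Q_def A_def f3_def split: option.splits)
  have "(\<integral>\<^sup>+s'. ennreal (potential n i s') \<partial>step n ((\<lambda>_. f3)(i := g)) s) =
      (\<integral>\<^sup>+y. \<integral>\<^sup>+a. ennreal (potential n i (outcome n s (a(i := y)))) \<partial>Pi_pmf A 0 Q \<partial>Q i)"
    unfolding step_def actions_def Q_def[symmetric] A(2)
    by (simp add: Pi_pmf_insert[OF A(1,3)] nn_integral_pair_pmf' case_prod_beta)
  also have "\<dots> = (\<integral>\<^sup>+y. \<integral>\<^sup>+a. ennreal (continuation_value y (loads A a)) \<partial>Pi_pmf A 0 Q \<partial>Q i)"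
  proof (intro nn_integral_cong_AE AE_pmfI)
    fix y a
    assume y: "y \<in> set_pmf (Q i)" and a: "a \<in> set_pmf (Pi_pmf A 0 Q)"
    have "a \<in> PiE_dflt A 0 (set_pmf \<circ> Q)"
      by (rule subsetD[OF set_Pi_pmf_subset'[OF A(1)] a])
    then have "\<forall>j\<in>A. s j = None \<longrightarrow> a j = 0" "\<forall>j\<in>A. s j \<noteq> None \<longrightarrow> a j \<in> {1, 2, 3}"
      using Q_others by (auto simp: PiE_dflt_def)
    moreover have "y \<le> 3"
      using y Q_i assms(3) by auto
    ultimately show "ennreal (potential n i (outcome n s (a(i := y)))) =
        ennreal (continuation_value y (loads A a))"
      using potential_outcome[where n = n and i = i and s = s, OF assms(1,2) A_def] by simp
  qed
  also have "\<dots> = (\<integral>\<^sup>+y. ennreal (expect_loads (card {j\<in>A. s j \<noteq> None}) (continuation_value y)) \<partial>Q i)"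
    by (intro nn_integral_cong nn_integral_Pi_pmf_loads[OF A(1) Q_others])
       (simp add: continuation_value_def latency_value_def)
  finally show ?thesis
    by (simp add: Q_i A_def)
qed

lemma potential_le_step_deviation:
  assumes "i < n" "n \<le> 5" "valid_rule 3 g"
  shows "ennreal (potential n i s) \<le>
    (\<integral>\<^sup>+s'. ennreal (potential n i s') \<partial>step n ((\<lambda>_. f3)(i := g)) s) + indicator {s. s i \<noteq> None} s"
proof (cases "s i")
  case (Some h)
  define m where "m = card {j\<in>{..<n} - {i}. s j \<noteq> None}"
  have m: "m \<le> 4"
    unfolding m_def by (rule card_pending_others_le[OF assms(1,2)])
  have g: "set_pmf (g h) \<subseteq> {0..3}"
    using assms(3) by (simp add: valid_rule_def)
  have "ennreal (potential n i s) = (\<integral>\<^sup>+y. ennreal (latency_value m - 1) \<partial>g h) + 1"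
    using ennreal_potential_pending[where s = s, OF assms(1,2) Some] by (simp add: m_def measure_pmf.emeasure_space_1)
  also have "\<dots> \<le> (\<integral>\<^sup>+y. ennreal (expect_loads m (continuation_value y)) \<partial>g h) + 1"
  proof (intro add_right_mono nn_integral_mono_AE AE_pmfI ennreal_leI)
    fix y
    assume "y \<in> set_pmf (g h)"
    then have "y = 0 \<or> y \<in> {1, 2, 3}"
      using g by auto
    then show "latency_value m - 1 \<le> expect_loads m (continuation_value y)"
      using expect_loads_continuation_idle[OF m] expect_loads_continuation_transmit[OF m] by auto
  qed
  also have "\<dots> = (\<integral>\<^sup>+s'. ennreal (potential n i s') \<partial>step n ((\<lambda>_. f3)(i := g)) s) + indicator {s. s i \<noteq> None} s"
    using nn_integral_step_potential[where s = s and g = g, OF assms(1) Some g] Some by (simp add: m_def)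
  finally show ?thesis .
qed (simp add: potential_def)

lemma fun_upd_f3 [simp]: "(\<lambda>_. f3)(i := f3) = (\<lambda>_. f3)"
  by (simp add: fun_eq_iff)

lemma step_f3_le_potential:
  assumes "i < n" "n \<le> 5"
  shows "(\<integral>\<^sup>+s'. ennreal (potential n i s') \<partial>step n (\<lambda>_. f3) s) + indicator {s. s i \<noteq> None} s \<le>
    ennreal (potential n i s)"
proof (cases "s i")
  case None
  then show ?thesis by (simp add: nn_integral_step_potential_departed)
next
  case (Some h)
  define m where "m = card {j\<in>{..<n} - {i}. s j \<noteq> None}"
  have m: "m \<le> 4"
    unfolding m_def by (rule card_pending_others_le[OF assms(1,2)])
  have f3_channels: "set_pmf (f3 h) \<subseteq> {0..3}"
    by (auto simp: f3_def)
  have "(\<integral>\<^sup>+s'. ennreal (potential n i s') \<partial>step n (\<lambda>_. f3) s) + indicator {s. s i \<noteq> None} s =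
      (\<integral>\<^sup>+y. ennreal (expect_loads m (continuation_value y)) \<partial>f3 h) + 1"
    using nn_integral_step_potential[where s = s and g = f3, OF assms(1) Some f3_channels] Some
    by (simp add: m_def)
  also have "\<dots> = (\<integral>\<^sup>+y. ennreal (latency_value m - 1) \<partial>f3 h) + 1"
    using expect_loads_continuation_transmit[OF m]
    by (intro arg_cong2[where f = "(+)"] nn_integral_cong_AE AE_pmfI) (simp_all add: f3_def)
  also have "\<dots> = ennreal (potential n i s)"
    using ennreal_potential_pending[where s = s, OF assms(1,2) Some] by (simp add: m_def measure_pmf.emeasure_space_1)
  finally show ?thesis by simp
qed

lemma valid_rule_f3: "valid_rule 3 f3"
  by (auto simp: valid_rule_def f3_def)

lemma potential_le_exp_remaining_deviation:
  fixes p :: "state pmf"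
  assumes "i < n" "n \<le> 5" "valid_rule 3 g"
  shows "(\<integral>\<^sup>+s. ennreal (potential n i s) \<partial>p) \<le> exp_remaining n ((\<lambda>_. f3)(i := g)) i p"
  using potential_le_step_deviation[OF assms] potential_bounded
  by (intro potential_le_exp_remaining[where c = 3]) auto

lemma exp_remaining_f3:
  fixes p :: "state pmf"
  assumes "i < n" "n \<le> 5"
  shows "exp_remaining n (\<lambda>_. f3) i p = (\<integral>\<^sup>+s. ennreal (potential n i s) \<partial>p)"
proof (rule antisym)
  show "exp_remaining n (\<lambda>_. f3) i p \<le> (\<integral>\<^sup>+s. ennreal (potential n i s) \<partial>p)"
    by (intro exp_remaining_le_potential step_f3_le_potential assms)
  show "(\<integral>\<^sup>+s. ennreal (potential n i s) \<partial>p) \<le> exp_remaining n (\<lambda>_. f3) i p"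
    using potential_le_exp_remaining_deviation[OF assms valid_rule_f3] by simp
qed

lemma potential_init:
  assumes "i < n"
  shows "potential n i (init n) = latency_value (n - 1)"
proof -
  have "{j\<in>{..<n} - {i}. init n j \<noteq> None} = {..<n} - {i}"
    by (auto simp: init_def)
  then show ?thesis
    using assms by (simp add: potential_def init_def)
qed

theorem theorem4:
  assumes "n \<in> {2, 3, 4, 5::nat}"
  shows "equilibrium_protocol n 3 f3 \<and>
    (\<forall>i<n. expected_latency n f3 i =
       ennreal (if n = 2 then 3/2 else if n = 3 then 15/8
                else if n = 4 then 189/80 else 597/200))"
proof (intro conjI allI impI)
  have n: "n \<le> 5"
    using assms by auto
  show "equilibrium_protocol n 3 f3"
    unfolding equilibrium_protocol_def cond_latency_def fun_upd_f3
  proof (intro conjI valid_rule_f3 allI impI add_left_mono)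
    fix i h g
    assume "i < n" "valid_rule 3 g"
    then show "exp_remaining n (\<lambda>_. f3) i (cond_pmf (prior n f3 i h) (hist_event i h)) \<le>
        exp_remaining n ((\<lambda>_. f3)(i := g)) i (cond_pmf (prior n f3 i h) (hist_event i h))"
      unfolding exp_remaining_f3[OF \<open>i < n\<close> n] by (rule potential_le_exp_remaining_deviation[OF _ n])
  qed
  fix i
  assume "i < n"
  then show "expected_latency n f3 i = ennreal (if n = 2 then 3/2 else if n = 3 then 15/8
                else if n = 4 then 189/80 else 597/200)"
    using assms by (auto simp: expected_latency_def exp_remaining_f3[OF _ n] potential_init latency_value_def)
qed

end
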